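(* Let $Q_k$ be a $K$-subset system and $\mathbb N=(N,\sigma)$ the natural numbers with the Scott topology of the usual order. Then: (1) $\mathbb N$ is $1^d$-special and $1^{wf}$-special; (2) $\overline D(\mathbb N)=\overline{KF}(\mathbb N)$, and $D(\mathbb N)=K(\mathbb N)=KF(\mathbb N)$; (3) $\mathbb N$ is $1^k$-special.
   Context: $Q(X)$: nonempty compact saturated subsets; filtered family: nonempty, any two members contain a third. A $K$-subset system $Q_k$ assigns to each $T_0$ space $X$ a set $Q_k(X)$ with $\{\uparrow x\mid x\in X\}\subseteq Q_k(X)\subseteq Q(X)$ such that continuous images of $k$-Rudin sets are $k$-Rudin, where a nonempty $A\subseteq X$ is $k$-Rudin if for some filtered $\mathcal K\subseteq Q_k(X)$, $\overline A$ is a minimal closed set meeting every member of $\mathcal K$. $\overline{KF}(X)$ denotes the $k$-Rudin sets for the choice $Q_k(X)=Q(X)$ (Rudin sets), and $\overline D(X)=\{A\subseteq X\mid \overline A=\overline D$ for some directed $D\subseteq X\}$. $K(X)$: classes of $k$-Rudin sets under $A\sim B\iff\overline A=\overline B$, open sets $U^*=\{[A]\mid A\cap U\ne\emptyset\}$. $D(X)$ and $KF(X)$ are $K(X)$ for $Q_k(X)=\{\uparrow x\mid x\in X\}$ and $Q_k(X)=Q(X)$ respectively (the equalities in (2) identify a class with the common closure of its members). Iterates: $K_0(X)=X$, $K_{\beta+1}(X)=K(K_\beta(X))$, unions at limits; $\mathrm{rank}_k(X)$ least $\alpha$ with $K_\alpha(X)\cong K_{\alpha+1}(X)$; $X$ is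 $\alpha^k$-special if $\mathrm{rank}_k(X)=\alpha$ and $\alpha$ is least with $K_\alpha(X)$ having a greatest element. The notions $D_\beta,\mathrm{rank}_d,\alpha^d$-special and $KF_\beta,\mathrm{rank}_{wf},\alpha^{wf}$-special are the same with $D$, resp. $KF$, in place of $K$. *)

theory Defs
  imports "HOL-Analysis.Analysis"
begin

definition directed_set :: "'a::order set \<Rightarrow> bool" where
  "directed_set D \<longleftrightarrow> D \<noteq> {} \<and> (\<forall>x\<in>D. \<forall>y\<in>D. \<exists>z\<in>D. x \<le> z \<and> y \<le> z)"

definition is_lub :: "'a::order set \<Rightarrow> 'a \<Rightarrow> bool" where
  "is_lub D s \<longleftrightarrow> (\<forall>x\<in>D. x \<le> s) \<and> (\<forall>u. (\<forall>x\<in>D. x \<le> u) \<longrightarrow> s \<le> u)"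

definition scott_open :: "'a::order set \<Rightarrow> bool" where
  "scott_open U \<longleftrightarrow>
     (\<forall>x y. x \<in> U \<and> x \<le> y \<longrightarrow> y \<in> U) \<and>
     (\<forall>D s. directed_set D \<and> is_lub D s \<and> s \<in> U \<longrightarrow> D \<inter> U \<noteq> {})"

definition scott_topology :: "'a::order topology" where
  "scott_topology = topology scott_open"

definition natScott :: "nat topology" where
  "natScott = scott_topology"

definition spec_le :: "'a topology \<Rightarrow> 'a \<Rightarrow> 'a \<Rightarrow> bool" where
  "spec_le X x y \<longleftrightarrow> x \<in> X closure_of {y}"

definition upset :: "'a topology \<Rightarrow> 'a \<Rightarrow> 'a set" where
  "upset X x = {y \<in> topspace X. spec_le X x y}"

definition saturated_in :: "'a topology \<Rightarrow> 'a set \<Rightarrow> bool" where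
  "saturated_in X A \<longleftrightarrow> A \<subseteq> topspace X \<and>
     A = {x \<in> topspace X. \<forall>U. openin X U \<and> A \<subseteq> U \<longrightarrow> x \<in> U}"

definition Qset :: "'a topology \<Rightarrow> 'a set set" where
  "Qset X = {K. K \<noteq> {} \<and> compactin X K \<and> saturated_in X K}"

definition Qpt :: "'a topology \<Rightarrow> 'a set set" where
  "Qpt X = {upset X x | x. x \<in> topspace X}"

definition filtered_family :: "'a set set \<Rightarrow> bool" where
  "filtered_family F \<longleftrightarrow> F \<noteq> {} \<and> (\<forall>K1\<in>F. \<forall>K2\<in>F. \<exists>K3\<in>F. K3 \<subseteq> K1 \<and> K3 \<subseteq> K2)"

definition minimal_meeting :: "'a topology \<Rightarrow> 'a set set \<Rightarrow> 'a set \<Rightarrow> bool" where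
  "minimal_meeting X F C \<longleftrightarrow> closedin X C \<and> (\<forall>K\<in>F. C \<inter> K \<noteq> {}) \<and>
     (\<forall>C'. closedin X C' \<and> C' \<subseteq> C \<and> (\<forall>K\<in>F. C' \<inter> K \<noteq> {}) \<longrightarrow> C' = C)"

definition krudin :: "('a topology \<Rightarrow> 'a set set) \<Rightarrow> 'a topology \<Rightarrow> 'a set \<Rightarrow> bool" where
  "krudin Q X A \<longleftrightarrow> A \<noteq> {} \<and> A \<subseteq> topspace X \<and>
     (\<exists>F. filtered_family F \<and> F \<subseteq> Q X \<and> minimal_meeting X F (X closure_of A))"

text \<open>Points of K(X): classes of k-Rudin sets, each class represented by the common
  closure of its members.\<close>
definition kpoints :: "('a topology \<Rightarrow> 'a set set) \<Rightarrow> 'a topology \<Rightarrow> 'a set set" where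
  "kpoints Q X = (\<lambda>A. X closure_of A) ` {A. krudin Q X A}"

definition ostar :: "('a topology \<Rightarrow> 'a set set) \<Rightarrow> 'a topology \<Rightarrow> 'a set \<Rightarrow> 'a set set" where
  "ostar Q X U = {C \<in> kpoints Q X. C \<inter> U \<noteq> {}}"

definition Kspace :: "('a topology \<Rightarrow> 'a set set) \<Rightarrow> 'a topology \<Rightarrow> 'a set topology" where
  "Kspace Q X = topology_generated_by (ostar Q X ` {U. openin X U})"

definition Dspace :: "'a topology \<Rightarrow> 'a set topology" where
  "Dspace X = Kspace Qpt X"

definition KFspace :: "'a topology \<Rightarrow> 'a set topology" where
  "KFspace X = Kspace Qset X"

definition directed_in :: "'a topology \<Rightarrow> 'a set \<Rightarrow> bool" where
  "directed_in X D \<longleftrightarrow> D \<noteq> {} \<and> D \<subseteq> topspace X \<and>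
     (\<forall>x\<in>D. \<forall>y\<in>D. \<exists>z\<in>D. spec_le X x z \<and> spec_le X y z)"

definition Dbar :: "'a topology \<Rightarrow> 'a set set" where
  "Dbar X = {A. A \<subseteq> topspace X \<and> (\<exists>D. directed_in X D \<and> X closure_of A = X closure_of D)}"

definition KFbar :: "'a topology \<Rightarrow> 'a set set" where
  "KFbar X = {A. krudin Qset X A}"

definition has_greatest :: "'a topology \<Rightarrow> bool" where
  "has_greatest X \<longleftrightarrow> (\<exists>g\<in>topspace X. \<forall>x\<in>topspace X. spec_le X x g)"

section \<open>K-subset systems (restricted to the two carrier types used)\<close>

definition ksys_sandwich :: "('a topology \<Rightarrow> 'a set set) \<Rightarrow> bool" where
  "ksys_sandwich Q \<longleftrightarrow> (\<forall>X. t0_space X \<longrightarrow> Qpt X \<subseteq> Q X \<and> Q X \<subseteq> Qset X)"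

definition kpres :: "('a topology \<Rightarrow> 'a set set) \<Rightarrow> ('b topology \<Rightarrow> 'b set set) \<Rightarrow> bool" where
  "kpres Q Q' \<longleftrightarrow> (\<forall>X Y f A. t0_space X \<and> t0_space Y \<and> continuous_map X Y f \<and> krudin Q X A
       \<longrightarrow> krudin Q' Y (f ` A))"

definition K_subset_system2 :: "('a topology \<Rightarrow> 'a set set) \<Rightarrow> ('b topology \<Rightarrow> 'b set set) \<Rightarrow> bool" where
  "K_subset_system2 Q1 Q2 \<longleftrightarrow> ksys_sandwich Q1 \<and> ksys_sandwich Q2 \<and>
     kpres Q1 Q1 \<and> kpres Q1 Q2 \<and> kpres Q2 Q1 \<and> kpres Q2 Q2"

text \<open>rank = 1: not (K_0 ~ K_1) and K_1 ~ K_2; 1-special additionally: K_0 has no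
  greatest element, K_1 has one.\<close>
definition one_d_special :: "'a topology \<Rightarrow> bool" where
  "one_d_special X \<longleftrightarrow> \<not> (X homeomorphic_space Dspace X) \<and>
     Dspace X homeomorphic_space Dspace (Dspace X) \<and>
     \<not> has_greatest X \<and> has_greatest (Dspace X)"

definition one_wf_special :: "'a topology \<Rightarrow> bool" where
  "one_wf_special X \<longleftrightarrow> \<not> (X homeomorphic_space KFspace X) \<and>
     KFspace X homeomorphic_space KFspace (KFspace X) \<and>
     \<not> has_greatest X \<and> has_greatest (KFspace X)"

definition one_k_special ::
  "('a topology \<Rightarrow> 'a set set) \<Rightarrow> ('a set topology \<Rightarrow> 'a set set set) \<Rightarrow> 'a topology \<Rightarrow> bool" where
  "one_k_special Q1 Q2 X \<longleftrightarrow> \<not> (X homeomorphic_space Kspace Q1 X) \<and>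
     Kspace Q1 X homeomorphic_space Kspace Q2 (Kspace Q1 X) \<and>
     \<not> has_greatest X \<and> has_greatest (Kspace Q1 X)"

end

theory Submission
  imports Defs
begin

text \<open>The closure of a k-Rudin set is irreducible, so the open sets of K(X) are exactly the
  sets \<open>U\<^sup>*\<close>, and K(X) is a \<open>T\<^sub>0\<close> space specialization-ordered by inclusion. If every
  nonempty closed set of X is a point of K(X), every nonempty closed set of K(X) is the closure
  of a point, whence \<open>K(X) \<cong> K(K(X))\<close> via \<open>C \<mapsto> closure {C}\<close>.

  In \<open>\<nat>\<close> with the Scott topology the open sets are the upper sets, so Q(\<open>\<nat>\<close>) consists of the
  principal upper sets and, \<open>\<nat>\<close> being a chain, every nonempty subset is directed. Hence every
  choice of \<open>Q\<^sub>k\<close> yields the same k-Rudin sets (all nonempty sets) and the same space K(\<open>\<nat>\<close>),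
  whose points are all nonempty closed sets. K(\<open>\<nat>\<close>) has the greatest element \<open>\<nat>\<close>, which
  \<open>\<nat>\<close> itself lacks, so \<open>\<nat> \<not>\<cong> K(\<nat>) \<cong> K(K(\<nat>))\<close>.\<close>

lemma spec_le_refl: "x \<in> topspace X \<Longrightarrow> spec_le X x x"
  using closure_of_subset[of "{x}" X] by (simp add: spec_le_def)

lemma spec_le_trans:
  assumes "spec_le X x y" "spec_le X y z" shows "spec_le X x z"
  using assms closure_of_minimal[of "{y}" "X closure_of {z}" X]
  by (auto simp: spec_le_def)

lemma krudin_if_directed:
  assumes ne: "A \<noteq> {}" and sub: "A \<subseteq> topspace X"
    and dir: "\<forall>x\<in>A. \<forall>y\<in>A. \<exists>z\<in>A. spec_le X x z \<and> spec_le X y z"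
    and Q: "Qpt X \<subseteq> Q X"
  shows "krudin Q X A"
proof -
  define F where "F = upset X ` A"
  have "F \<subseteq> Q X" using Q sub by (auto simp: F_def Qpt_def)
  moreover have "filtered_family F"
    unfolding filtered_family_def
  proof (intro conjI ballI)
    show "F \<noteq> {}" using ne by (simp add: F_def)
    fix K1 K2 assume "K1 \<in> F" "K2 \<in> F"
    then obtain x y where xy: "x \<in> A" "y \<in> A" "K1 = upset X x" "K2 = upset X y"
      by (auto simp: F_def)
    then obtain z where z: "z \<in> A" "spec_le X x z" "spec_le X y z" using dir by blast
    then have "upset X z \<subseteq> K1 \<and> upset X z \<subseteq> K2"
      using xy spec_le_trans[of X x z] spec_le_trans[of X y z] by (auto simp: upset_def)
    then show "\<exists>K3\<in>F. K3 \<subseteq> K1 \<and> K3 \<subseteq> K2" using z by (auto simp: F_def)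
  qed
  moreover have "minimal_meeting X F (X closure_of A)"
    unfolding minimal_meeting_def
  proof (intro conjI allI impI ballI)
    fix K assume "K \<in> F"
    then obtain x where x: "x \<in> A" "K = upset X x" by (auto simp: F_def)
    then have "x \<in> X closure_of A \<inter> K"
      using sub closure_of_subset spec_le_refl[of x X] by (auto simp: upset_def)
    then show "X closure_of A \<inter> K \<noteq> {}" by blast
  next
    fix C assume C: "closedin X C \<and> C \<subseteq> X closure_of A \<and> (\<forall>K\<in>F. C \<inter> K \<noteq> {})"
    have "A \<subseteq> C"
    proof
      fix x assume "x \<in> A"
      then obtain w where "w \<in> C" "spec_le X x w"
        using C by (auto simp: F_def upset_def)
      then show "x \<in> C"
        using C closure_of_minimal[of "{w}" C X] by (auto simp: spec_le_def)
    qed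
    then show "C = X closure_of A" using C closure_of_minimal by blast
  qed simp
  ultimately show ?thesis unfolding krudin_def using ne sub by blast
qed

lemma kpoints_closedin: "C \<in> kpoints Q X \<Longrightarrow> closedin X C \<and> C \<noteq> {}"
  using closure_of_subset by (fastforce simp: kpoints_def krudin_def)

text \<open>The closure of a k-Rudin set is irreducible: if it met U and V but not
  \<open>U \<inter> V\<close>, the closed sets \<open>C - U\<close> and \<open>C - V\<close> would each miss a member of the
  filtered family, and a common lower bound of the two would be missed by C.\<close>
lemma kpoint_meets_Int:
  assumes C: "C \<in> kpoints Q X" and U: "openin X U" and V: "openin X V"
    and CU: "C \<inter> U \<noteq> {}" and CV: "C \<inter> V \<noteq> {}"
  shows "C \<inter> (U \<inter> V) \<noteq> {}"
proof
  assume disj: "C \<inter> (U \<inter> V) = {}"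
  obtain F where F: "filtered_family F" "minimal_meeting X F C"
    using C by (auto simp: kpoints_def krudin_def)
  have missed: "\<exists>K\<in>F. (C - W) \<inter> K = {}" if "openin X W" "C \<inter> W \<noteq> {}" for W
  proof (rule ccontr)
    assume "\<not> ?thesis"
    moreover have "closedin X (C - W)"
      using F(2) that(1) by (auto simp: minimal_meeting_def intro: closedin_diff)
    ultimately have "C - W = C" using F(2) unfolding minimal_meeting_def by blast
    then show False using that(2) by blast
  qed
  obtain K1 K2 where K12: "K1 \<in> F" "K2 \<in> F" "(C - U) \<inter> K1 = {}" "(C - V) \<inter> K2 = {}"
    using missed[OF U CU] missed[OF V CV] by blast
  then obtain K3 where K3: "K3 \<in> F" "K3 \<subseteq> K1" "K3 \<subseteq> K2"
    using F(1) unfolding filtered_family_def by blast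
  then have "C \<inter> K3 \<noteq> {}" using F(2) by (simp add: minimal_meeting_def)
  then show False using disj K12 K3 by blast
qed

lemma ostar_Int:
  "openin X U \<Longrightarrow> openin X V \<Longrightarrow> ostar Q X (U \<inter> V) = ostar Q X U \<inter> ostar Q X V"
  unfolding ostar_def using kpoint_meets_Int[of _ Q X U V] by (auto simp del: Int_iff)

lemma ostar_Union: "ostar Q X (\<Union>\<U>) = (\<Union>U\<in>\<U>. ostar Q X U)"
  unfolding ostar_def by blast

lemma openin_Kspace: "openin (Kspace Q X) W \<longleftrightarrow> (\<exists>U. openin X U \<and> W = ostar Q X U)"
proof
  assume "openin (Kspace Q X) W"
  then have "generate_topology_on (ostar Q X ` {U. openin X U}) W"
    unfolding Kspace_def by (rule openin_topology_generated_by)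
  then show "\<exists>U. openin X U \<and> W = ostar Q X U"
  proof (induction rule: generate_topology_on.induct)
    case Empty
    show ?case by (rule exI[of _ "{}"]) (simp add: ostar_def)
  next
    case (Int a b)
    then show ?case using ostar_Int by (metis openin_Int)
  next
    case (UN \<W>)
    then obtain u where u: "\<And>W. W \<in> \<W> \<Longrightarrow> openin X (u W) \<and> W = ostar Q X (u W)"
      by metis
    then have "\<Union>\<W> = ostar Q X (\<Union>(u ` \<W>))"
      unfolding ostar_Union by auto
    moreover have "openin X (\<Union>(u ` \<W>))" using u by blast
    ultimately show ?case by blast
  next
    case (Basis s)
    then show ?case by blast
  qed
next
  assume "\<exists>U. openin X U \<and> W = ostar Q X U"
  then show "openin (Kspace Q X) W"
    unfolding Kspace_def by (auto intro: topology_generated_by_Basis)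
qed

lemma topspace_Kspace: "topspace (Kspace Q X) = kpoints Q X"
proof
  show "topspace (Kspace Q X) \<subseteq> kpoints Q X"
    unfolding topspace_def openin_Kspace ostar_def by blast
  have "ostar Q X (topspace X) = kpoints Q X"
    using kpoints_closedin[of _ Q X] closedin_subset unfolding ostar_def by fastforce
  then show "kpoints Q X \<subseteq> topspace (Kspace Q X)"
    using openin_Kspace[of Q X] openin_subset by (metis openin_topspace)
qed

lemma kpoints_eq_nonempty_closedin:
  assumes "\<And>A. A \<noteq> {} \<Longrightarrow> A \<subseteq> topspace X \<Longrightarrow> krudin Q X A"
  shows "kpoints Q X = {C. closedin X C \<and> C \<noteq> {}}"
proof
  show "kpoints Q X \<subseteq> {C. closedin X C \<and> C \<noteq> {}}" using kpoints_closedin by blast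
  show "{C. closedin X C \<and> C \<noteq> {}} \<subseteq> kpoints Q X"
  proof
    fix C assume "C \<in> {C. closedin X C \<and> C \<noteq> {}}"
    then have "krudin Q X C" "X closure_of C = C"
      using assms[of C] closedin_subset[of X C] closure_of_closedin[of X C] by auto
    then show "C \<in> kpoints Q X" unfolding kpoints_def by (metis image_eqI mem_Collect_eq)
  qed
qed

lemma ostar_Diff_closedin:
  assumes "C \<in> kpoints Q X"
  shows "C \<in> ostar Q X (topspace X - D) \<longleftrightarrow> \<not> C \<subseteq> D"
proof -
  have "C \<subseteq> topspace X" using kpoints_closedin[OF assms] closedin_subset by blast
  then show ?thesis using assms unfolding ostar_def by blast
qed

lemma openin_Kspace_ostar_Diff:
  "closedin X D \<Longrightarrow> openin (Kspace Q X) (ostar Q X (topspace X - D))"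
  unfolding openin_Kspace by (blast intro: openin_diff)

lemma t0_space_Kspace: "t0_space (Kspace Q X)"
  unfolding t0_space_def topspace_Kspace
proof (intro ballI impI)
  have separate: "\<exists>W. openin (Kspace Q X) W \<and> (C \<notin> W \<longleftrightarrow> D \<in> W)"
    if "C \<in> kpoints Q X" "D \<in> kpoints Q X" "\<not> C \<subseteq> D" for C D
  proof (intro exI conjI)
    show "openin (Kspace Q X) (ostar Q X (topspace X - D))"
      using that(2) kpoints_closedin openin_Kspace_ostar_Diff by blast
    show "C \<notin> ostar Q X (topspace X - D) \<longleftrightarrow> D \<in> ostar Q X (topspace X - D)"
      using that ostar_Diff_closedin by blast
  qed
  fix C D assume "C \<in> kpoints Q X" "D \<in> kpoints Q X" "C \<noteq> D"
  then show "\<exists>W. openin (Kspace Q X) W \<and> (C \<notin> W \<longleftrightarrow> D \<in> W)"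
    using separate[of C D] separate[of D C] by blast
qed

lemma Kspace_closure_of_point:
  assumes C: "C \<in> kpoints Q X"
  shows "Kspace Q X closure_of {C} = {D \<in> kpoints Q X. D \<subseteq> C}"
proof (intro set_eqI iffI)
  fix D assume D: "D \<in> Kspace Q X closure_of {C}"
  then have Dk: "D \<in> kpoints Q X"
    using closure_of_subset_topspace[of "Kspace Q X" "{C}"] unfolding topspace_Kspace by blast
  have "D \<subseteq> C"
  proof (rule ccontr)
    assume "\<not> D \<subseteq> C"
    then have "D \<in> ostar Q X (topspace X - C)" using ostar_Diff_closedin[OF Dk] by blast
    moreover have "openin (Kspace Q X) (ostar Q X (topspace X - C))"
      using C kpoints_closedin openin_Kspace_ostar_Diff by blast
    ultimately have "C \<in> ostar Q X (topspace X - C)"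
      using D unfolding in_closure_of by blast
    then show False using ostar_Diff_closedin[OF C] by blast
  qed
  then show "D \<in> {D \<in> kpoints Q X. D \<subseteq> C}" using Dk by blast
next
  fix D assume D: "D \<in> {D \<in> kpoints Q X. D \<subseteq> C}"
  have "C \<in> W" if DW: "D \<in> W" and W: "openin (Kspace Q X) W" for W
  proof -
    obtain U where "W = ostar Q X U" using W openin_Kspace by blast
    then show ?thesis using DW C D unfolding ostar_def by blast
  qed
  then show "D \<in> Kspace Q X closure_of {C}"
    using D unfolding in_closure_of topspace_Kspace by blast
qed

lemma spec_le_Kspace:
  "C \<in> kpoints Q X \<Longrightarrow> spec_le (Kspace Q X) D C \<longleftrightarrow> D \<in> kpoints Q X \<and> D \<subseteq> C"
  by (simp add: spec_le_def Kspace_closure_of_point)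

lemma has_greatest_Kspace:
  assumes top: "topspace X \<in> kpoints Q X" shows "has_greatest (Kspace Q X)"
proof -
  have "spec_le (Kspace Q X) D (topspace X)" if "D \<in> kpoints Q X" for D
    using that spec_le_Kspace[OF top] kpoints_closedin closedin_subset by blast
  then show ?thesis unfolding has_greatest_def topspace_Kspace using top by blast
qed

lemma Kspace_closedin_point_closure:
  assumes kp: "\<And>C. closedin X C \<Longrightarrow> C \<noteq> {} \<Longrightarrow> C \<in> kpoints Q X"
    and F: "closedin (Kspace Q X) \<F>" "\<F> \<noteq> {}"
  shows "\<exists>C\<in>topspace (Kspace Q X). \<F> = Kspace Q X closure_of {C}"
proof -
  have Fk: "\<F> \<subseteq> kpoints Q X"
    using closedin_subset[OF F(1)] unfolding topspace_Kspace .
  obtain U where U: "openin X U" "kpoints Q X - \<F> = ostar Q X U"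
    using F(1) unfolding closedin_def topspace_Kspace openin_Kspace by blast
  define C where "C = topspace X - U"
  have "D \<in> ostar Q X U \<longleftrightarrow> \<not> D \<subseteq> C" if "D \<in> kpoints Q X" for D
    using that kpoints_closedin[OF that] closedin_subset[of X D]
    unfolding ostar_def C_def by blast
  then have F_eq: "\<F> = {D \<in> kpoints Q X. D \<subseteq> C}"
    using Fk U(2) by blast
  have "closedin X C" using U(1) unfolding C_def by blast
  moreover have "C \<noteq> {}"
    using F(2) kpoints_closedin unfolding F_eq by blast
  ultimately have "C \<in> kpoints Q X" by (rule kp)
  then show ?thesis using F_eq Kspace_closure_of_point topspace_Kspace by metis
qed

lemma homeomorphic_space_Kspace:
  assumes t0: "t0_space X" and Q: "Qpt X \<subseteq> Q X"
    and pc: "\<And>C. closedin X C \<Longrightarrow> C \<noteq> {} \<Longrightarrow> \<exists>x\<in>topspace X. C = X closure_of {x}"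
  shows "X homeomorphic_space Kspace Q X"
proof -
  define f where "f x = X closure_of {x}" for x
  have "f ` topspace X = kpoints Q X"
  proof
    have "krudin Q X {x}" if "x \<in> topspace X" for x
      using that Q spec_le_refl[OF that] by (intro krudin_if_directed) auto
    then show "f ` topspace X \<subseteq> kpoints Q X" unfolding f_def kpoints_def by blast
    show "kpoints Q X \<subseteq> f ` topspace X"
    proof
      fix C assume "C \<in> kpoints Q X"
      then obtain x where "x \<in> topspace X" "C = f x"
        using pc[of C] kpoints_closedin[of C Q X] unfolding f_def by blast
      then show "C \<in> f ` topspace X" by blast
    qed
  qed
  then have range_f: "f ` topspace X = topspace (Kspace Q X)"
    by (simp add: topspace_Kspace)
  have inj: "inj_on f (topspace X)"
    by (rule inj_onI) (use t0 in \<open>simp add: t0_space_closure_of_sing f_def\<close>)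
  have ostar_eq: "ostar Q X U = f ` U" if U: "openin X U" for U
  proof -
    have meets: "f x \<inter> U \<noteq> {} \<longleftrightarrow> x \<in> U" for x
      using openin_Int_closure_of_eq_empty[OF U, of "{x}"] unfolding f_def by blast
    have "ostar Q X U = {C \<in> f ` topspace X. C \<inter> U \<noteq> {}}"
      by (simp add: ostar_def range_f topspace_Kspace)
    also have "\<dots> = f ` U"
      using meets openin_subset[OF U] by blast
    finally show ?thesis .
  qed
  have "continuous_map X (Kspace Q X) f"
    unfolding continuous_map_def
  proof (intro conjI allI impI)
    show "f \<in> topspace X \<rightarrow> topspace (Kspace Q X)" using range_f by blast
    fix W assume "openin (Kspace Q X) W"
    then obtain U where U: "openin X U" "W = ostar Q X U" using openin_Kspace by blast
    have "f x \<in> f ` U \<longleftrightarrow> x \<in> U" if "x \<in> topspace X" for x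
      using inj_on_image_mem_iff[OF inj that openin_subset[OF U(1)]] .
    then have "{x \<in> topspace X. f x \<in> W} = U"
      using U ostar_eq[OF U(1)] openin_subset[OF U(1)] by blast
    then show "openin X {x \<in> topspace X. f x \<in> W}" using U(1) by simp
  qed
  moreover have "open_map X (Kspace Q X) f"
    unfolding open_map_def
  proof (intro allI impI)
    fix U assume U: "openin X U"
    then have "openin (Kspace Q X) (ostar Q X U)" using openin_Kspace by blast
    then show "openin (Kspace Q X) (f ` U)" by (simp add: ostar_eq[OF U])
  qed
  ultimately have "homeomorphic_map X (Kspace Q X) f"
    using range_f inj by (rule bijective_open_imp_homeomorphic_map)
  then show ?thesis using homeomorphic_space by blast
qed

lemma has_greatest_homeomorphic:
  assumes "X homeomorphic_space Y" "has_greatest Y" shows "has_greatest X"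
proof -
  obtain f where f: "homeomorphic_map Y X f"
    using assms(1) homeomorphic_space homeomorphic_space_sym by blast
  obtain g where g: "g \<in> topspace Y" "\<forall>y\<in>topspace Y. spec_le Y y g"
    using assms(2) by (auto simp: has_greatest_def)
  have range_f: "f ` topspace Y = topspace X"
    using f by (simp add: homeomorphic_eq_everything_map)
  have "X closure_of {f g} = f ` (Y closure_of {g})"
    using homeomorphic_map_closure_of[OF f, of "{g}"] g by simp
  then have "spec_le X (f y) (f g)" if "y \<in> topspace Y" for y
    using that g unfolding spec_le_def by blast
  then have "\<forall>x\<in>topspace X. spec_le X x (f g)" unfolding range_f[symmetric] by blast
  then show ?thesis
    unfolding has_greatest_def using g(1) range_f by blast
qed

lemma Kspace_cong: "Q X = Q' X \<Longrightarrow> Kspace Q X = Kspace Q' X"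
  unfolding Kspace_def ostar_def kpoints_def krudin_def by simp

text \<open>A directed subset of \<open>\<nat>\<close> with a least upper bound is bounded, hence finite, and so
  contains its supremum; thus the Scott-open sets are just the upper sets.\<close>
lemma scott_open_nat_iff: "scott_open (U :: nat set) \<longleftrightarrow> (\<forall>x y. x \<in> U \<and> x \<le> y \<longrightarrow> y \<in> U)"
proof
  assume up: "\<forall>x y. x \<in> U \<and> x \<le> y \<longrightarrow> y \<in> U"
  have "D \<inter> U \<noteq> {}" if "directed_set D" "is_lub D s" "s \<in> U" for D s
  proof -
    have "finite D" using that(2) finite_subset[of D "{..s}"] unfolding is_lub_def by blast
    moreover have "D \<noteq> {}" using that(1) unfolding directed_set_def by blast
    ultimately have "Max D \<in> D" "s \<le> Max D"
      using that(2) unfolding is_lub_def by auto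
    then show ?thesis using up that(3) by blast
  qed
  then show "scott_open U" using up unfolding scott_open_def by blast
qed (simp add: scott_open_def)

lemma openin_natScott: "openin natScott U \<longleftrightarrow> (\<forall>x y. x \<in> U \<and> x \<le> y \<longrightarrow> y \<in> U)"
proof -
  have "istopology (scott_open :: nat set \<Rightarrow> bool)"
    unfolding istopology_def scott_open_nat_iff by blast
  then show ?thesis by (simp add: natScott_def scott_topology_def scott_open_nat_iff)
qed

lemma topspace_natScott: "topspace natScott = UNIV"
  using openin_subset[of natScott UNIV] by (simp add: openin_natScott top.extremum_unique)

lemma closure_of_natScott: "natScott closure_of A = {x. \<exists>a\<in>A. x \<le> a}"
proof (intro set_eqI iffI)
  fix x assume "x \<in> natScott closure_of A"
  moreover have "openin natScott {x..}" by (simp add: openin_natScott)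
  ultimately show "x \<in> {x. \<exists>a\<in>A. x \<le> a}" unfolding in_closure_of by auto
next
  fix x assume "x \<in> {x. \<exists>a\<in>A. x \<le> a}"
  then show "x \<in> natScott closure_of A"
    unfolding in_closure_of topspace_natScott openin_natScott by blast
qed

lemma spec_le_natScott: "spec_le natScott x y \<longleftrightarrow> x \<le> y"
  by (simp add: spec_le_def closure_of_natScott)

lemma t0_space_natScott: "t0_space natScott"
  unfolding t0_space_def
proof (intro ballI impI)
  fix x y :: nat assume "x \<noteq> y"
  then have "x \<notin> {max x y..} \<longleftrightarrow> y \<in> {max x y..}" by (simp add: max_def)
  then show "\<exists>U. openin natScott U \<and> (x \<notin> U \<longleftrightarrow> y \<in> U)"
    by (intro exI[of _ "{max x y..}"]) (simp add: openin_natScott)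
qed

lemma no_greatest_natScott: "\<not> has_greatest natScott"
  unfolding has_greatest_def spec_le_natScott topspace_natScott by (metis Suc_n_not_le_n UNIV_I)

text \<open>A saturated set is an upper set, so a nonempty one is the principal upper set of its
  least element.\<close>
lemma Qset_natScott: "Qset natScott \<subseteq> Qpt natScott"
proof
  fix K assume "K \<in> Qset natScott"
  then have ne: "K \<noteq> {}" and sat: "saturated_in natScott K" by (auto simp: Qset_def)
  define m where "m = (LEAST x. x \<in> K)"
  have "m \<in> K" using ne unfolding m_def by (metis LeastI ex_in_conv)
  then have "x \<in> K" if "m \<le> x" for x
    using sat that unfolding saturated_in_def topspace_natScott openin_natScott by blast
  moreover have "m \<le> x" if "x \<in> K" for x
    using that unfolding m_def by (rule Least_le)
  ultimately have "K = upset natScott m"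
    by (auto simp: upset_def spec_le_natScott topspace_natScott)
  then show "K \<in> Qpt natScott" by (auto simp: Qpt_def topspace_natScott)
qed

lemma spec_le_natScott_upper_bound:
  "x \<in> A \<Longrightarrow> y \<in> A \<Longrightarrow> \<exists>z\<in>A. spec_le natScott x z \<and> spec_le natScott y z"
  unfolding spec_le_natScott by (cases "x \<le> y") auto

lemma krudin_natScott:
  assumes "A \<noteq> {}" "Qpt natScott \<subseteq> Q natScott" shows "krudin Q natScott A"
  using assms spec_le_natScott_upper_bound
  by (intro krudin_if_directed) (auto simp: topspace_natScott)

lemma Dbar_natScott: "Dbar natScott = {A. A \<noteq> {}}"
proof (intro set_eqI iffI)
  fix A assume "A \<in> Dbar natScott"
  then obtain D where D: "directed_in natScott D" "natScott closure_of A = natScott closure_of D"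
    unfolding Dbar_def by blast
  have "D \<subseteq> natScott closure_of A"
    using D(2) closure_of_subset[of D natScott] by (simp add: topspace_natScott)
  then show "A \<in> {A. A \<noteq> {}}"
    using D(1) unfolding directed_in_def by auto
next
  fix A :: "nat set" assume "A \<in> {A. A \<noteq> {}}"
  then have "directed_in natScott A"
    unfolding directed_in_def using spec_le_natScott_upper_bound by (simp add: topspace_natScott)
  then show "A \<in> Dbar natScott" unfolding Dbar_def topspace_natScott by blast
qed

lemma KFbar_natScott:
  assumes "Qpt natScott \<subseteq> Qset natScott" shows "KFbar natScott = {A. A \<noteq> {}}"
  using krudin_natScott[of _ Qset] assms unfolding KFbar_def krudin_def by blast

lemma kpoints_natScott:
  "Qpt natScott \<subseteq> Q natScott \<Longrightarrow> kpoints Q natScott = {C. closedin natScott C \<and> C \<noteq> {}}"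
  by (rule kpoints_eq_nonempty_closedin) (rule krudin_natScott)

lemma homeomorphic_space_Kspace_Dspace_natScott:
  assumes "Qpt (Dspace natScott) \<subseteq> Q (Dspace natScott)"
  shows "Dspace natScott homeomorphic_space Kspace Q (Dspace natScott)"
  unfolding Dspace_def
proof (rule homeomorphic_space_Kspace[where Q=Q])
  show "t0_space (Kspace Qpt natScott)" by (rule t0_space_Kspace)
  show "Qpt (Kspace Qpt natScott) \<subseteq> Q (Kspace Qpt natScott)"
    using assms unfolding Dspace_def .
next
  fix \<F> assume "closedin (Kspace Qpt natScott) \<F>" "\<F> \<noteq> {}"
  then show "\<exists>C\<in>topspace (Kspace Qpt natScott). \<F> = Kspace Qpt natScott closure_of {C}"
    by (rule Kspace_closedin_point_closure[rotated]) (simp add: kpoints_natScott)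
qed

lemma has_greatest_Dspace_natScott: "has_greatest (Dspace natScott)"
  unfolding Dspace_def
proof (rule has_greatest_Kspace)
  have "topspace natScott \<noteq> {}" by (simp add: topspace_natScott)
  then show "topspace natScott \<in> kpoints Qpt natScott" by (simp add: kpoints_natScott)
qed

theorem mainTheorem10:
  fixes Q1 :: "nat topology \<Rightarrow> nat set set"
    and Q2 :: "nat set topology \<Rightarrow> nat set set set"
  assumes "K_subset_system2 Q1 Q2"
  shows "one_d_special natScott \<and> one_wf_special natScott
       \<and> (Dbar natScott = KFbar natScott
          \<and> Dspace natScott = Kspace Q1 natScott \<and> Kspace Q1 natScott = KFspace natScott)
       \<and> one_k_special Q1 Q2 natScott"
proof -
  have "ksys_sandwich Q1" "ksys_sandwich Q2"
    using assms unfolding K_subset_system2_def by auto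
  then have Q1: "Qpt natScott \<subseteq> Q1 natScott \<and> Q1 natScott \<subseteq> Qset natScott"
    and Q2: "Qpt (Dspace natScott) \<subseteq> Q2 (Dspace natScott)
             \<and> Q2 (Dspace natScott) \<subseteq> Qset (Dspace natScott)"
    using t0_space_natScott t0_space_Kspace[of Qpt natScott]
    unfolding ksys_sandwich_def Dspace_def by blast+
  then have "Q1 natScott = Qpt natScott" "Qset natScott = Qpt natScott"
    using Qset_natScott by auto
  then have K: "Kspace Q1 natScott = Dspace natScott" "KFspace natScott = Dspace natScott"
    unfolding KFspace_def Dspace_def by (auto intro: Kspace_cong)
  have not_homeo: "\<not> natScott homeomorphic_space Dspace natScott"
    using has_greatest_homeomorphic has_greatest_Dspace_natScott no_greatest_natScott by blast
  have "Dspace natScott homeomorphic_space Dspace (Dspace natScott)"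
    unfolding Dspace_def[of "Dspace natScott"]
    by (rule homeomorphic_space_Kspace_Dspace_natScott) simp
  moreover have "Dspace natScott homeomorphic_space KFspace (Dspace natScott)"
    unfolding KFspace_def[of "Dspace natScott"]
    using Q2 by (intro homeomorphic_space_Kspace_Dspace_natScott) blast
  moreover have "Dspace natScott homeomorphic_space Kspace Q2 (Dspace natScott)"
    using Q2 by (intro homeomorphic_space_Kspace_Dspace_natScott) blast
  moreover have "Dbar natScott = KFbar natScott"
    using Dbar_natScott KFbar_natScott Q1 by auto
  ultimately show ?thesis
    unfolding one_d_special_def one_wf_special_def one_k_special_def K
    using not_homeo no_greatest_natScott has_greatest_Dspace_natScott by simp
qed

end
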